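(* Let $\{(\phi^n,\mu^n,R^n,\xi^n)\}$ be generated by Scheme 1B and set $M:=R^0=\sqrt{E[\phi_{in}]}$. Then for all $n\ge0$: $0<R^{n+1}\le R^n\le M$ and $0<\xi^{n+1}\le \frac{M}{\sqrt{c_0}}$.
   Context: Standing setup: $\Omega\subset\mathbb{R}^d$ ($d=2,3$) is a bounded domain with smooth boundary and outward unit normal $\mathbf{n}$; $\|\cdot\|_0$ is the $L^2(\Omega)$ norm. Let $\lambda\ge 0$, $H(s)=\frac14(s^2-1)^2$, $h(s)=H'(s)=s^3-s$. Fix $c_0>0$ and define $E[\phi]=\int_\Omega\big(\tfrac12|\nabla\phi|^2+\tfrac{\lambda}{2}\phi^2+H(\phi)\big)dx+c_0$ (so $E[\phi]\ge c_0$). Time step $\Delta t>0$. Set $\phi^0=\phi_{in}$, $\mu^0=-\Delta\phi^0+\lambda\phi^0+h(\phi^0)$, $R^0=\sqrt{E[\phi^0]}$, $\xi^0=1$. Scheme 1B: for $n\ge0$, solve $\frac{\phi^{n+1}-\phi^n}{\Delta t}=\Delta\mu^{n+1}$, $\mu^{n+1}=-\Delta\phi^{n+1}+\lambda\phi^{n+1}+|\xi^{n}|^2h(\phi^n)$ with $\nabla\phi^{n+1}\cdot\mathbf{n}=\nabla\mu^{n+1}\cdot\mathbf{n}=0$ on $\partial\Omega$; then $\frac{R^{n+1}-R^n}{\Delta t}=-\frac{\xi^{n+1}}{2\sqrt{E[\phi^{n+1}]}}\int_\Omega|\nabla\mu^{n+1}|^2dx$ with $\xi^{n+1}=R^{n+1}/\sqrt{E[\phi^{n+1}]}$.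 *)

theory Defs
  imports "HOL-Analysis.Analysis"
begin

definition pderiv_i :: "'d::finite \<Rightarrow> (real^'d \<Rightarrow> real) \<Rightarrow> real^'d \<Rightarrow> real" where
  "pderiv_i i f x = frechet_derivative f (at x) (axis i 1)"

definition grad :: "(real^'d::finite \<Rightarrow> real) \<Rightarrow> real^'d \<Rightarrow> real^'d" where
  "grad f x = (\<chi> i. pderiv_i i f x)"

definition lap :: "(real^'d::finite \<Rightarrow> real) \<Rightarrow> real^'d \<Rightarrow> real" where
  "lap f x = (\<Sum>i\<in>UNIV. pderiv_i i (pderiv_i i f) x)"

definition Hpot :: "real \<Rightarrow> real" where
  "Hpot s = (s^2 - 1)^2 / 4"

definition hpot :: "real \<Rightarrow> real" where
  "hpot s = s^3 - s"

definition energy :: "(real^'d::finite) set \<Rightarrow> real \<Rightarrow> real \<Rightarrow> (real^'d \<Rightarrow> real) \<Rightarrow> real" where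
  "energy \<Omega> lam c0 \<phi> =
     integral \<Omega> (\<lambda>x. (norm (grad \<phi> x))^2 / 2 + lam / 2 * (\<phi> x)^2 + Hpot (\<phi> x)) + c0"

end

theory Submission
  imports Defs
begin

text \<open>Since \<open>\<xi>\<^sup>n\<^sup>+\<^sup>1 = R\<^sup>n\<^sup>+\<^sup>1/\<surd>E[\<phi>\<^sup>n\<^sup>+\<^sup>1]\<close>, the update for \<open>R\<close> is linear in \<open>R\<^sup>n\<^sup>+\<^sup>1\<close> and solves to
  \<open>R\<^sup>n\<^sup>+\<^sup>1 = R\<^sup>n / (1 + \<Delta>t \<parallel>\<nabla>\<mu>\<^sup>n\<^sup>+\<^sup>1\<parallel>\<^sup>2 / (2 E[\<phi>\<^sup>n\<^sup>+\<^sup>1]))\<close>, a division by a factor \<open>\<ge> 1\<close>.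
  Hence \<open>R\<close> stays positive and decreases, and \<open>E \<ge> c\<^sub>0\<close> bounds \<open>\<xi>\<close> by \<open>M/\<surd>c\<^sub>0\<close>.\<close>

lemma integral_nonneg_everywhere:
  fixes f :: "'a::euclidean_space \<Rightarrow> real"
  assumes "\<And>x. 0 \<le> f x"
  shows "0 \<le> integral S f"
proof (cases "f integrable_on S")
  case True
  then show ?thesis using integral_nonneg assms by blast
next
  case False
  then show ?thesis by (simp add: not_integrable_integral)
qed

lemma energy_ge_c0:
  assumes "lam \<ge> 0"
  shows "c0 \<le> energy \<Omega> lam c0 \<phi>"
proof -
  have "0 \<le> integral \<Omega> (\<lambda>x. (norm (grad \<phi> x))^2 / 2 + lam / 2 * (\<phi> x)^2 + Hpot (\<phi> x))"
    by (rule integral_nonneg_everywhere) (use assms in \<open>auto simp: Hpot_def\<close>)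
  then show ?thesis unfolding energy_def by simp
qed

lemma sav_update_pos_le:
  fixes a b S I dt :: real
  assumes "a > 0" "S > 0" "I \<ge> 0" "dt > 0"
    and "(b - a) / dt = - ((b / S) / (2 * S)) * I"
  shows "0 < b \<and> b \<le> a"
proof -
  have factor: "1 \<le> 1 + dt * I / (2 * S * S)"
    using assms by simp
  have "b * (1 + dt * I / (2 * S * S)) = a"
    using assms by (simp add: field_simps)
  then have "b = a / (1 + dt * I / (2 * S * S))"
    using factor by (simp add: field_simps)
  with factor \<open>a > 0\<close> show ?thesis
    by (simp add: divide_le_eq)
qed

lemma pos_nonincreasing_bounded_by_start:
  fixes R :: "nat \<Rightarrow> real"
  assumes "R 0 > 0" and "\<And>n. R n > 0 \<Longrightarrow> 0 < R (Suc n) \<and> R (Suc n) \<le> R n"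
  shows "0 < R n \<and> R n \<le> R 0"
  by (induction n) (use assms in \<open>auto intro: order_trans\<close>)

lemma ratio_le_div_sqrt:
  fixes r M E c0 :: real
  assumes "0 < r" "r \<le> M" "0 < c0" "c0 \<le> E"
  shows "0 < r / sqrt E \<and> r / sqrt E \<le> M / sqrt c0"
proof -
  have "r / sqrt E \<le> r / sqrt c0"
    using assms by (intro divide_left_mono) auto
  also have "\<dots> \<le> M / sqrt c0"
    using assms by (intro divide_right_mono) auto
  finally show ?thesis
    using assms by simp
qed

theorem mainTheorem7:
  fixes \<Omega> :: "(real^'d::finite) set"
    and nu :: "real^'d \<Rightarrow> real^'d"
    and lam c0 dt :: real
    and \<phi> \<mu> :: "nat \<Rightarrow> real^'d \<Rightarrow> real"
    and R \<xi> :: "nat \<Rightarrow> real"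
  assumes dim: "CARD('d) = 2 \<or> CARD('d) = 3"
    and dom: "open \<Omega>" "connected \<Omega>" "bounded \<Omega>" "\<Omega> \<noteq> {}"
    and normal: "\<forall>x\<in>frontier \<Omega>. norm (nu x) = 1"
    and lam: "lam \<ge> 0" and c0: "c0 > 0" and dt: "dt > 0"
    and init_mu: "\<forall>x\<in>\<Omega>. \<mu> 0 x = - lap (\<phi> 0) x + lam * \<phi> 0 x + hpot (\<phi> 0 x)"
    and init_R: "R 0 = sqrt (energy \<Omega> lam c0 (\<phi> 0))"
    and init_xi: "\<xi> 0 = 1"
    and eq_phi: "\<forall>n. \<forall>x\<in>\<Omega>. (\<phi> (Suc n) x - \<phi> n x) / dt = lap (\<mu> (Suc n)) x"
    and eq_mu: "\<forall>n. \<forall>x\<in>\<Omega>. \<mu> (Suc n) x =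
                  - lap (\<phi> (Suc n)) x + lam * \<phi> (Suc n) x + (\<bar>\<xi> n\<bar>)^2 * hpot (\<phi> n x)"
    and bc_phi: "\<forall>n. \<forall>x\<in>frontier \<Omega>. grad (\<phi> (Suc n)) x \<bullet> nu x = 0"
    and bc_mu: "\<forall>n. \<forall>x\<in>frontier \<Omega>. grad (\<mu> (Suc n)) x \<bullet> nu x = 0"
    and eq_R: "\<forall>n. (R (Suc n) - R n) / dt =
                 - (\<xi> (Suc n) / (2 * sqrt (energy \<Omega> lam c0 (\<phi> (Suc n)))))
                   * integral \<Omega> (\<lambda>x. (norm (grad (\<mu> (Suc n)) x))^2)"
    and eq_xi: "\<forall>n. \<xi> (Suc n) = R (Suc n) / sqrt (energy \<Omega> lam c0 (\<phi> (Suc n)))"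
  shows "\<forall>n. 0 < R (Suc n) \<and> R (Suc n) \<le> R n \<and> R n \<le> R 0
             \<and> 0 < \<xi> (Suc n) \<and> \<xi> (Suc n) \<le> R 0 / sqrt c0"
proof
  fix n
  have energy_pos: "0 < energy \<Omega> lam c0 p" for p
    using energy_ge_c0[OF lam] c0 by (meson less_le_trans)
  have step: "0 < R (Suc m) \<and> R (Suc m) \<le> R m" if "R m > 0" for m
  proof (rule sav_update_pos_le)
    show "(R (Suc m) - R m) / dt = - ((R (Suc m) / sqrt (energy \<Omega> lam c0 (\<phi> (Suc m))))
        / (2 * sqrt (energy \<Omega> lam c0 (\<phi> (Suc m))))) * integral \<Omega> (\<lambda>x. (norm (grad (\<mu> (Suc m)) x))^2)"
      using eq_R eq_xi by metis
  qed (use that energy_pos dt in \<open>auto intro: integral_nonneg_everywhere\<close>)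
  have bounded: "0 < R m \<and> R m \<le> R 0" for m
    using init_R energy_pos step by (intro pos_nonincreasing_bounded_by_start) auto
  have "0 < \<xi> (Suc n) \<and> \<xi> (Suc n) \<le> R 0 / sqrt c0"
    using ratio_le_div_sqrt[OF _ _ c0 energy_ge_c0[OF lam]] bounded[of "Suc n"] eq_xi
    by metis
  then show "0 < R (Suc n) \<and> R (Suc n) \<le> R n \<and> R n \<le> R 0
             \<and> 0 < \<xi> (Suc n) \<and> \<xi> (Suc n) \<le> R 0 / sqrt c0"
    using step bounded by blast
qed

end
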